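(* Let $n\ge 1$, $N=\{1,\dots,n\}$, $A=(a_{ij})\in[0,1]^{n\times n}$ and $\lambda\in[0,+\infty)$. Let $x=(x_1,\dots,x_n)\in[0,1]^n$ with $x\neq\theta$. Then $x\in V(A,\lambda)$ if and only if there exists $k=(k_1,\dots,k_n)\in K$ such that $$q_{(k_j-1)j}\le x_j\le q_{k_jj}\ \text{ for all } j\in N,\qquad \sum_{j\in N}\big[\delta_{ij}\, x_j+(1-\delta_{ij})\, a_{ij}\big]=\lambda x_i\ \text{ for all } i\in N,$$ where $\delta_{ij}$ (depending on $k$) is as defined in the context.
   Context: $\theta=(0,\dots,0)\in[0,1]^n$. For $x\in[0,1]^n$ and $\lambda\in[0,+\infty)$, the equation $A\odot x^T=\lambda x^T$ means $\sum_{j\in N}\min\{a_{ij},x_j\}=\lambda x_i$ for every $i\in N$ (ordinary addition and multiplication). $V(A,\lambda)=\{x\in[0,1]^n : A\odot x^T=\lambda x^T,\ x\neq\theta\}$ is the set of eigenvectors of $A$ associated with $\lambda$. For each $j\in N$, let $t_j$ be the number of distinct values in $\{a_{ij}: i\in N\}\cap(0,1)$, list these values as $q_{1j}<q_{2j}<\dots<q_{t_jj}$, and put $q_{0j}=0$, $q_{(t_j+1)j}=1$, $Q_j=\{q_{0j},\dots,q_{(t_j+1)j}\}$. Let $K_j=\{k: q_{kj}\in Q_j,\ q_{kj}>0\}=\{1,\dots,t_j+1\}$ and $K=K_1\times\dots\times K_n$. For $k=(k_1,\dots,k_n)\in K$ and $i,j\in N$, set $\delta_{ij}=1$ if $q_{k_jj}\le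 a_{ij}$ and $\delta_{ij}=0$ if $a_{ij}\le q_{(k_j-1)j}$ (exactly one of these holds since $a_{ij}\in Q_j$). *)

theory Defs
  imports "HOL-Analysis.Analysis"
begin

text \<open>Index set N = {1..n} is rendered as the finite type 'n (N = UNIV);
  matrices are real^'n^'n with entry a_ij = A$i$j.\<close>

definition colvals :: "real^'n^'n \<Rightarrow> 'n \<Rightarrow> real set" where
  "colvals A j = {A$i$j | i. True} \<inter> {0<..<1}"

definition tnum :: "real^'n^'n \<Rightarrow> 'n \<Rightarrow> nat" where
  "tnum A j = card (colvals A j)"

definition Qset :: "real^'n^'n \<Rightarrow> 'n \<Rightarrow> real set" where
  "Qset A j = {0, 1} \<union> colvals A j"

text \<open>q A k j = q_{kj}: the k-th element (0-based) of Q_j in increasing order.\<close>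
definition q :: "real^'n^'n \<Rightarrow> nat \<Rightarrow> 'n \<Rightarrow> real" where
  "q A k j = sorted_list_of_set (Qset A j) ! k"

definition Kset :: "real^'n^'n \<Rightarrow> ('n \<Rightarrow> nat) set" where
  "Kset A = {k. \<forall>j. k j \<in> {1..tnum A j + 1}}"

definition delta :: "real^'n^'n \<Rightarrow> ('n \<Rightarrow> nat) \<Rightarrow> 'n \<Rightarrow> 'n \<Rightarrow> real" where
  "delta A k i j = (if q A (k j) j \<le> A$i$j then 1 else 0)"

definition eigvecs :: "real^'n^'n \<Rightarrow> real \<Rightarrow> (real^'n) set" where
  "eigvecs A lam = {x. (\<forall>j. 0 \<le> x$j \<and> x$j \<le> 1)
      \<and> (\<forall>i. (\<Sum>j\<in>UNIV. min (A$i$j) (x$j)) = lam * x$i) \<and> x \<noteq> 0}"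

end

theory Submission
  imports Defs
begin

text \<open>On each column j, min (a_ij, x_j) is linear in x_j on every cell [q_(k-1)j, q_kj]
  between consecutive points of Q_j: since a_ij is itself one of these points, either
  q_kj \<le> a_ij, and the minimum is x_j, or a_ij \<le> q_(k-1)j, and the minimum is a_ij.
  The eigenvector equation is therefore equivalent to its linearisation on the cell
  containing x, and the cells cover [0,1]^n.\<close>

lemma list_consecutive_bracket:
  fixes xs :: "'a::linorder list"
  assumes "hd xs \<le> y" and "y \<le> last xs" and "2 \<le> length xs"
  shows "\<exists>k. Suc k < length xs \<and> xs ! k \<le> y \<and> y \<le> xs ! Suc k"
  using assms
proof (induction xs rule: induct_list012)
  case (3 a b rest)
  show ?case
  proof (cases "y \<le> b")
    case True
    then show ?thesis using "3.prems" by (intro exI[of _ 0]) auto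
  next
    case False
    then have "rest \<noteq> []" using "3.prems" by auto
    then have "2 \<le> length (b # rest)" by (cases rest) auto
    moreover have "hd (b # rest) \<le> y" and "y \<le> last (b # rest)"
      using "3.prems" False by auto
    ultimately obtain k where "Suc k < length (b # rest)" "(b # rest) ! k \<le> y" "y \<le> (b # rest) ! Suc k"
      using "3.IH"(2) by blast
    then show ?thesis by (intro exI[of _ "Suc k"]) auto
  qed
qed auto

lemma hd_sorted_list_of_set:
  fixes S :: "'a::linorder set"
  assumes "finite S" and "S \<noteq> {}"
  shows "hd (sorted_list_of_set S) = Min S"
  using sorted_list_of_set_nonempty[OF assms] by simp

lemma last_sorted_list_of_set:
  fixes S :: "'a::linorder set"
  assumes "finite S" and "S \<noteq> {}"
  shows "last (sorted_list_of_set S) = Max S"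
proof -
  let ?s = "sorted_list_of_set S"
  have "?s \<noteq> []" using assms by simp
  have "a \<le> last ?s" if "a \<in> S" for a
  proof -
    obtain m where "m < length ?s" "?s ! m = a"
      using \<open>a \<in> S\<close> assms(1) by (metis in_set_conv_nth set_sorted_list_of_set)
    then show ?thesis
      using \<open>?s \<noteq> []\<close> sorted_nth_mono[OF sorted_sorted_list_of_set, of m "length ?s - 1" S]
      by (simp add: last_conv_nth)
  qed
  moreover have "last ?s \<in> S"
    using last_in_set[OF \<open>?s \<noteq> []\<close>] assms(1) by simp
  ultimately have "Max S = last ?s"
    by (rule Max_eqI[OF assms(1)])
  then show ?thesis by simp
qed

lemma sorted_list_of_set_no_point_between:
  fixes S :: "'a::linorder set"
  assumes "finite S" and "a \<in> S" and "Suc k < card S" and "sorted_list_of_set S ! k < a"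
  shows "sorted_list_of_set S ! Suc k \<le> a"
proof -
  let ?s = "sorted_list_of_set S"
  obtain m where m: "m < length ?s" "?s ! m = a"
    using assms(1,2) by (metis in_set_conv_nth set_sorted_list_of_set)
  have "k < m"
  proof (rule ccontr)
    assume "\<not> k < m"
    then have "a \<le> ?s ! k"
      using m assms(3) sorted_nth_mono[OF sorted_sorted_list_of_set, of m k S] by simp
    then show False using assms(4) by simp
  qed
  then show ?thesis using m sorted_nth_mono[OF sorted_sorted_list_of_set, of "Suc k" m S] by simp
qed

lemma finite_colvals: "finite (colvals A j)"
proof -
  have "{A$i$j | i. True} = range (\<lambda>i. A$i$j)" by auto
  then show ?thesis by (simp add: colvals_def)
qed

lemma finite_Qset: "finite (Qset A j)"
  by (simp add: Qset_def finite_colvals)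

lemma card_Qset: "card (Qset A j) = tnum A j + 2"
proof -
  have "Qset A j = insert 0 (insert 1 (colvals A j))" by (auto simp: Qset_def)
  moreover have "0 \<notin> colvals A j" "1 \<notin> colvals A j" by (auto simp: colvals_def)
  ultimately show ?thesis by (simp add: tnum_def finite_colvals)
qed

lemma Min_Qset: "Min (Qset A j) = 0"
  by (rule Min_eqI[OF finite_Qset]) (auto simp: Qset_def colvals_def)

lemma Max_Qset: "Max (Qset A j) = 1"
  by (rule Max_eqI[OF finite_Qset]) (auto simp: Qset_def colvals_def)

lemma entry_in_Qset:
  assumes "0 \<le> A$i$j" and "A$i$j \<le> 1"
  shows "A$i$j \<in> Qset A j"
  using assms by (cases "A$i$j = 0 \<or> A$i$j = 1") (auto simp: Qset_def colvals_def)

lemma cell_exists: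
  assumes "0 \<le> y" and "y \<le> 1"
  shows "\<exists>kj \<in> {1..tnum A j + 1}. q A (kj - 1) j \<le> y \<and> y \<le> q A kj j"
proof -
  let ?s = "sorted_list_of_set (Qset A j)"
  have "Qset A j \<noteq> {}" by (simp add: Qset_def)
  then have "hd ?s = 0" and "last ?s = 1"
    by (simp_all add: hd_sorted_list_of_set last_sorted_list_of_set finite_Qset Min_Qset Max_Qset)
  moreover have "length ?s = tnum A j + 2" by (simp add: card_Qset)
  ultimately obtain k where "Suc k < tnum A j + 2" "?s ! k \<le> y" "y \<le> ?s ! Suc k"
    using list_consecutive_bracket[of ?s y] assms by auto
  then show ?thesis by (intro bexI[of _ "Suc k"]) (auto simp: q_def)
qed

lemma cells_cover:
  assumes "\<forall>j. 0 \<le> x$j \<and> x$j \<le> 1"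
  shows "\<exists>k\<in>Kset A. \<forall>j. q A (k j - 1) j \<le> x$j \<and> x$j \<le> q A (k j) j"
proof -
  have "\<forall>j. \<exists>kj. kj \<in> {1..tnum A j + 1} \<and> q A (kj - 1) j \<le> x$j \<and> x$j \<le> q A kj j"
    using cell_exists assms by blast
  then obtain k where "\<forall>j. k j \<in> {1..tnum A j + 1} \<and> q A (k j - 1) j \<le> x$j \<and> x$j \<le> q A (k j) j"
    by metis
  then show ?thesis by (auto simp: Kset_def)
qed

lemma min_eq_delta_on_cell:
  assumes "0 \<le> A$i$j" and "A$i$j \<le> 1" and "k \<in> Kset A"
    and "q A (k j - 1) j \<le> y" and "y \<le> q A (k j) j"
  shows "min (A$i$j) y = delta A k i j * y + (1 - delta A k i j) * A$i$j"
proof (cases "q A (k j) j \<le> A$i$j")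
  case True
  then show ?thesis using assms by (simp add: delta_def)
next
  case False
  have "1 \<le> k j" and kj_le: "k j \<le> tnum A j + 1"
    using assms(3) by (auto simp: Kset_def)
  then obtain m where "k j = Suc m" by (cases "k j") auto
  with kj_le have m: "k j = Suc m" "Suc m < card (Qset A j)" by (auto simp: card_Qset)
  have "A$i$j \<le> q A (k j - 1) j"
    using sorted_list_of_set_no_point_between[OF finite_Qset entry_in_Qset[OF assms(1,2)] m(2)]
      False m(1) by (force simp: q_def)
  then show ?thesis using assms False by (simp add: delta_def)
qed

theorem theorem3p1:
  fixes A :: "real^'n^'n" and lam :: real and x :: "real^'n"
  assumes "\<forall>i j. 0 \<le> A$i$j \<and> A$i$j \<le> 1"
    and "0 \<le> lam"
    and "\<forall>j. 0 \<le> x$j \<and> x$j \<le> 1"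
    and "x \<noteq> 0"
  shows "x \<in> eigvecs A lam \<longleftrightarrow>
    (\<exists>k\<in>Kset A. (\<forall>j. q A (k j - 1) j \<le> x$j \<and> x$j \<le> q A (k j) j)
       \<and> (\<forall>i. (\<Sum>j\<in>UNIV. delta A k i j * x$j + (1 - delta A k i j) * A$i$j) = lam * x$i))"
proof -
  have linearised_sum:
    "(\<Sum>j\<in>UNIV. delta A k i j * x$j + (1 - delta A k i j) * A$i$j) = (\<Sum>j\<in>UNIV. min (A$i$j) (x$j))"
    if "k \<in> Kset A" and "\<forall>j. q A (k j - 1) j \<le> x$j \<and> x$j \<le> q A (k j) j" for k i
    using that assms(1) min_eq_delta_on_cell[of A i _ k] by (intro sum.cong) auto
  show ?thesis
  proof
    assume "x \<in> eigvecs A lam"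
    then have eigen: "(\<Sum>j\<in>UNIV. min (A$i$j) (x$j)) = lam * x$i" for i
      by (simp add: eigvecs_def)
    obtain k where cell: "k \<in> Kset A" "\<forall>j. q A (k j - 1) j \<le> x$j \<and> x$j \<le> q A (k j) j"
      using cells_cover[OF assms(3)] by blast
    moreover have "(\<Sum>j\<in>UNIV. delta A k i j * x$j + (1 - delta A k i j) * A$i$j) = lam * x$i" for i
      using linearised_sum[OF cell] eigen by simp
    ultimately show "\<exists>k\<in>Kset A. (\<forall>j. q A (k j - 1) j \<le> x$j \<and> x$j \<le> q A (k j) j)
       \<and> (\<forall>i. (\<Sum>j\<in>UNIV. delta A k i j * x$j + (1 - delta A k i j) * A$i$j) = lam * x$i)"
      by blast
  next
    assume "\<exists>k\<in>Kset A. (\<forall>j. q A (k j - 1) j \<le> x$j \<and> x$j \<le> q A (k j) j)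
       \<and> (\<forall>i. (\<Sum>j\<in>UNIV. delta A k i j * x$j + (1 - delta A k i j) * A$i$j) = lam * x$i)"
    then obtain k where cell: "k \<in> Kset A" "\<forall>j. q A (k j - 1) j \<le> x$j \<and> x$j \<le> q A (k j) j"
      and linear: "\<forall>i. (\<Sum>j\<in>UNIV. delta A k i j * x$j + (1 - delta A k i j) * A$i$j) = lam * x$i"
      by blast
    then have "(\<Sum>j\<in>UNIV. min (A$i$j) (x$j)) = lam * x$i" for i
      using linearised_sum[OF cell] by simp
    then show "x \<in> eigvecs A lam"
      using assms(3,4) by (simp add: eigvecs_def)
  qed
qed

end
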